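(* Under the standing assumptions below, Problem (BP) and Problem (OP) are equivalent in the following sense. (a) If $\bar z$ is an optimal solution of (OP) and $(\bar x,\bar y)$ is an optimal solution of the problem $MP(\bar z)$ defining $\varphi(\bar z)$, then $(\bar x,\bar y)$ is an optimal solution of (BP). (b) Conversely, if $(\bar x,\bar y)$ is an optimal solution of (BP), then $\bar z=f(\bar x)$ is an optimal solution of (OP), and $\varphi(f(\bar x))=h(\bar x,\bar y)$. In particular, the optimal values of (BP) and (OP) coincide.
   Context: Standing assumptions: $X=\{x\in\mathbb{R}^n\mid s(x)\le 0\}$ is nonempty, bounded and convex, where $s:\mathbb{R}^n\to\mathbb{R}^q$ is continuously differentiable with quasiconvex components. $f=(f_1,\dots,f_p):\mathbb{R}^n\to\mathbb{R}^p$ is continuously differentiable with each $f_i$ pseudoconvex; $g:\mathbb{R}^n\times\mathbb{R}^m\to\mathbb{R}^\ell$ is continuously differentiable with quasiconvex components; $h:\mathbb{R}^n\times\mathbb{R}^m\to\mathbb{R}$ is continuous and pseudoconvex. (A differentiable $G$ is pseudoconvex if $\nabla G(x)^\top(\tilde x-x)\ge 0\Rightarrow G(\tilde x)\ge G(x)$; quasiconvex if $G(\lambda x+(1-\lambda)\tilde x)\le\max\{G(x),G(\tilde x)\}$ for $\lambda\in[0,1]$.) For $a,b\in\mathbb{R}^p$, $a\le b$ means $a_i\le b_i$ for all $i$ and $a<b$ means $a_i<b_i$ for all $i$. For $Q\subset\mathbb{R}^p$, ${\rm WMin}\,Q$ is the set of $q\in Q$ such that there is no $q'\in Q$ with $q'<q$.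 $X_{WE}$ denotes the set of $x\in X$ such that there is no $x'\in X$ with $f(x')<f(x)$ (weakly efficient solutions of $\min\{f(x)\mid x\in X\}$). Problem (BP): minimize $h(x,y)$ subject to $g(x,y)\le 0$, $y\in\mathbb{R}^m_+$, $x\in X_{WE}$. Let $\mathcal{G}=\{(x,y)\mid x\in X,\ y\in\mathbb{R}^m_+,\ g(x,y)\le 0\}$, $\mathcal{Z}=\{f(x)\mid x\in X\}$, $\mathcal{Z}^+=\mathcal{Z}+\mathbb{R}^p_+$, let $M\in\mathbb{R}^p$ satisfy $f(x)\le M$ for all $x\in X$, and $\mathcal{Z}^\diamond=\mathcal{Z}^+\cap(M-\mathbb{R}^p_+)$. For $z\in\mathcal{Z}^\diamond$, $MP(z)$ is the problem $\min\{h(x,y)\mid (x,y)\in\mathcal{G},\ f(x)\le z\}$ and $\varphi(z)$ is its optimal value. Problem (OP): minimize $\varphi(z)$ subject to $z\in{\rm WMin}\,\mathcal{Z}^\diamond$. *)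

theory Defs
  imports "HOL-Analysis.Analysis"
begin

text \<open>Componentwise strict order on R^p: a < b iff a_i < b_i for all i.
  (The library's x < y on vectors is the non-strict-componentwise partial order,
  so we use our own.)  The non-strict order is the library's x \<le> y,
  which is componentwise.\<close>
definition vless :: "real^'p \<Rightarrow> real^'p \<Rightarrow> bool" (infix "<\<^sub>v" 50) where
  "a <\<^sub>v b \<longleftrightarrow> (\<forall>i. a $ i < b $ i)"

definition quasiconvex_fun :: "('a::real_vector \<Rightarrow> real) \<Rightarrow> bool" where
  "quasiconvex_fun G \<longleftrightarrow>
     (\<forall>x x' t. 0 \<le> t \<and> t \<le> 1 \<longrightarrow> G (t *\<^sub>R x + (1 - t) *\<^sub>R x') \<le> max (G x) (G x'))"

text \<open>Pseudoconvexity of a differentiable function; the gradient pairing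
  \<nabla>G(x)^T (x' - x) is the Frechet derivative of G at x applied to x' - x.\<close>
definition pseudoconvex_fun :: "('a::real_normed_vector \<Rightarrow> real) \<Rightarrow> bool" where
  "pseudoconvex_fun G \<longleftrightarrow> (\<forall>x. G differentiable (at x)) \<and>
     (\<forall>x x'. frechet_derivative G (at x) (x' - x) \<ge> 0 \<longrightarrow> G x' \<ge> G x)"

definition C1_fun :: "('a::real_normed_vector \<Rightarrow> 'b::real_normed_vector) \<Rightarrow> bool" where
  "C1_fun F \<longleftrightarrow> (\<exists>F'. (\<forall>x. (F has_derivative blinfun_apply (F' x)) (at x)) \<and> continuous_on UNIV F')"

definition feasX :: "(real^'n \<Rightarrow> real^'q) \<Rightarrow> (real^'n) set" where
  "feasX s = {x. s x \<le> 0}"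

definition XWE :: "(real^'n \<Rightarrow> real^'q) \<Rightarrow> (real^'n \<Rightarrow> real^'p) \<Rightarrow> (real^'n) set" where
  "XWE s f = {x \<in> feasX s. \<not> (\<exists>x' \<in> feasX s. f x' <\<^sub>v f x)}"

definition WMin :: "(real^'p) set \<Rightarrow> (real^'p) set" where
  "WMin Q = {q \<in> Q. \<not> (\<exists>q' \<in> Q. q' <\<^sub>v q)}"

definition feasG :: "(real^'n \<Rightarrow> real^'q) \<Rightarrow> (real^'n \<Rightarrow> real^'m \<Rightarrow> real^'l)
    \<Rightarrow> ((real^'n) \<times> (real^'m)) set" where
  "feasG s g = {(x, y). x \<in> feasX s \<and> 0 \<le> y \<and> g x y \<le> 0}"

definition Zdiam :: "(real^'n \<Rightarrow> real^'q) \<Rightarrow> (real^'n \<Rightarrow> real^'p) \<Rightarrow> real^'p \<Rightarrow> (real^'p) set" where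
  "Zdiam s f M = {z + d | z d. z \<in> f ` feasX s \<and> 0 \<le> d} \<inter> {w. w \<le> M}"

definition feasMP :: "(real^'n \<Rightarrow> real^'q) \<Rightarrow> (real^'n \<Rightarrow> real^'p) \<Rightarrow> (real^'n \<Rightarrow> real^'m \<Rightarrow> real^'l)
    \<Rightarrow> real^'p \<Rightarrow> ((real^'n) \<times> (real^'m)) set" where
  "feasMP s f g z = {(x, y) \<in> feasG s g. f x \<le> z}"

text \<open>Optimal value \<phi>(z) of MP(z), as an extended real (+\<infinity> if infeasible).\<close>
definition phi :: "(real^'n \<Rightarrow> real^'q) \<Rightarrow> (real^'n \<Rightarrow> real^'p) \<Rightarrow> (real^'n \<Rightarrow> real^'m \<Rightarrow> real^'l)
    \<Rightarrow> (real^'n \<Rightarrow> real^'m \<Rightarrow> real) \<Rightarrow> real^'p \<Rightarrow> ereal" where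
  "phi s f g h z = (INF p \<in> feasMP s f g z. ereal (h (fst p) (snd p)))"

definition optMP where
  "optMP s f g h z x y \<longleftrightarrow> (x, y) \<in> feasMP s f g z \<and>
     (\<forall>(x', y') \<in> feasMP s f g z. h x y \<le> h x' y')"

definition feasBP :: "(real^'n \<Rightarrow> real^'q) \<Rightarrow> (real^'n \<Rightarrow> real^'p) \<Rightarrow> (real^'n \<Rightarrow> real^'m \<Rightarrow> real^'l)
    \<Rightarrow> ((real^'n) \<times> (real^'m)) set" where
  "feasBP s f g = {(x, y). g x y \<le> 0 \<and> 0 \<le> y \<and> x \<in> XWE s f}"

definition optBP where
  "optBP s f g h x y \<longleftrightarrow> (x, y) \<in> feasBP s f g \<and>
     (\<forall>(x', y') \<in> feasBP s f g. h x y \<le> h x' y')"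

definition optOP where
  "optOP s f g h M z \<longleftrightarrow> z \<in> WMin (Zdiam s f M) \<and>
     (\<forall>z' \<in> WMin (Zdiam s f M). phi s f g h z \<le> phi s f g h z')"

end

theory Submission
  imports Defs
begin

text \<open>Only the order structure matters.
  If z is weakly minimal in Z^\<diamond>, then every x \<in> X with f x \<le> z is weakly efficient, so
  the feasible set of MP(z) lies inside that of (BP). Conversely, if (x, y) is feasible
  for (BP), then f x is weakly minimal in Z^\<diamond> and (x, y) is feasible for MP(f x). Hence
  \<phi>(z) is bounded below by the optimal value of (BP) on WMin Z^\<diamond>, and that bound is
  attained at z = f x whenever (x, y) solves (BP).\<close>

lemma vless_le_trans: "a <\<^sub>v b \<Longrightarrow> b \<le> c \<Longrightarrow> a <\<^sub>v c"
  unfolding vless_def less_eq_vec_def by (meson less_le_trans)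

lemma le_vless_trans: "a \<le> b \<Longrightarrow> b <\<^sub>v c \<Longrightarrow> a <\<^sub>v c"
  unfolding vless_def less_eq_vec_def by (meson le_less_trans)

lemma image_mem_Zdiam: "x \<in> feasX s \<Longrightarrow> f x \<le> M \<Longrightarrow> f x \<in> Zdiam s f M"
  unfolding Zdiam_def by force

lemma Zdiam_dominates_image:
  assumes "q \<in> Zdiam s f M"
  obtains x where "x \<in> feasX s" "f x \<le> q"
  using assms unfolding Zdiam_def less_eq_vec_def by fastforce

lemma XWE_if_le_WMin:
  assumes z: "z \<in> WMin (Zdiam s f M)" and x: "x \<in> feasX s" and fx: "f x \<le> z"
    and M_bd: "\<And>x. x \<in> feasX s \<Longrightarrow> f x \<le> M"
  shows "x \<in> XWE s f"
proof -
  have False if x': "x' \<in> feasX s" and lt: "f x' <\<^sub>v f x" for x'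
  proof -
    have "f x' \<in> Zdiam s f M" using x' M_bd[OF x'] by (rule image_mem_Zdiam)
    moreover have "f x' <\<^sub>v z" using vless_le_trans[OF lt fx] .
    ultimately show False using z unfolding WMin_def by blast
  qed
  with x show ?thesis unfolding XWE_def by blast
qed

lemma image_XWE_subset_WMin:
  assumes x: "x \<in> XWE s f" and M_bd: "\<And>x. x \<in> feasX s \<Longrightarrow> f x \<le> M"
  shows "f x \<in> WMin (Zdiam s f M)"
proof -
  have xX: "x \<in> feasX s" using x unfolding XWE_def by blast
  have False if "q \<in> Zdiam s f M" and lt: "q <\<^sub>v f x" for q
  proof -
    obtain x' where "x' \<in> feasX s" "f x' \<le> q" using Zdiam_dominates_image[OF \<open>q \<in> _\<close>] .
    with le_vless_trans[OF _ lt] x show False unfolding XWE_def by blast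
  qed
  moreover have "f x \<in> Zdiam s f M" using xX M_bd[OF xX] by (rule image_mem_Zdiam)
  ultimately show ?thesis unfolding WMin_def by blast
qed

lemma feasMP_subset_feasBP:
  assumes "z \<in> WMin (Zdiam s f M)" and "\<And>x. x \<in> feasX s \<Longrightarrow> f x \<le> M"
  shows "feasMP s f g z \<subseteq> feasBP s f g"
  using XWE_if_le_WMin[OF assms(1) _ _ assms(2)]
  unfolding feasMP_def feasG_def feasBP_def by auto

lemma feasBP_imp_feasMP: "(x, y) \<in> feasBP s f g \<Longrightarrow> (x, y) \<in> feasMP s f g (f x)"
  unfolding feasBP_def feasMP_def feasG_def XWE_def by auto

lemma feasBP_image_WMin:
  "(x, y) \<in> feasBP s f g \<Longrightarrow> (\<And>x. x \<in> feasX s \<Longrightarrow> f x \<le> M) \<Longrightarrow> f x \<in> WMin (Zdiam s f M)"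
  using image_XWE_subset_WMin unfolding feasBP_def by blast

lemma phi_le_feasBP: "(x, y) \<in> feasBP s f g \<Longrightarrow> phi s f g h (f x) \<le> ereal (h x y)"
  unfolding phi_def by (rule INF_lower2[OF feasBP_imp_feasMP]) auto

lemma INF_feasBP_le_phi:
  assumes "z \<in> WMin (Zdiam s f M)" and "\<And>x. x \<in> feasX s \<Longrightarrow> f x \<le> M"
  shows "(INF p \<in> feasBP s f g. ereal (h (fst p) (snd p))) \<le> phi s f g h z"
  unfolding phi_def using feasMP_subset_feasBP[OF assms] by (rule INF_superset_mono) auto

lemma INF_feasBP_eq_INF_phi:
  assumes M_bd: "\<And>x. x \<in> feasX s \<Longrightarrow> f x \<le> M"
  shows "(INF p \<in> feasBP s f g. ereal (h (fst p) (snd p)))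
    = (INF z \<in> WMin (Zdiam s f M). phi s f g h z)"
proof (rule antisym)
  show "(INF p \<in> feasBP s f g. ereal (h (fst p) (snd p))) \<le> (INF z \<in> WMin (Zdiam s f M). phi s f g h z)"
    using INF_feasBP_le_phi[OF _ M_bd] by (rule INF_greatest)
  show "(INF z \<in> WMin (Zdiam s f M). phi s f g h z) \<le> (INF p \<in> feasBP s f g. ereal (h (fst p) (snd p)))"
  proof (rule INF_greatest, clarify)
    fix x y assume feas: "(x, y) \<in> feasBP s f g"
    have "(INF z \<in> WMin (Zdiam s f M). phi s f g h z) \<le> phi s f g h (f x)"
      using feasBP_image_WMin[OF feas M_bd] by (rule INF_lower)
    also have "\<dots> \<le> ereal (h x y)" using feas by (rule phi_le_feasBP)
    finally show "(INF z \<in> WMin (Zdiam s f M). phi s f g h z) \<le> ereal (h (fst (x, y)) (snd (x, y)))"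
      by simp
  qed
qed

lemma optMP_imp_phi_eq: "optMP s f g h z x y \<Longrightarrow> phi s f g h z = ereal (h x y)"
  unfolding optMP_def phi_def
  by (intro antisym INF_lower2[of "(x, y)"]) (auto intro!: INF_greatest)

lemma optBP_imp_eq_INF: "optBP s f g h x y \<Longrightarrow>
    ereal (h x y) = (INF p \<in> feasBP s f g. ereal (h (fst p) (snd p)))"
  unfolding optBP_def
  by (intro antisym INF_lower2[of "(x, y)"]) (auto intro!: INF_greatest)

theorem proposition3p2:
  fixes s :: "real^'n \<Rightarrow> real^'q"
    and f :: "real^'n \<Rightarrow> real^'p"
    and g :: "real^'n \<Rightarrow> real^'m \<Rightarrow> real^'l"
    and h :: "real^'n \<Rightarrow> real^'m \<Rightarrow> real"
    and M :: "real^'p"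
  assumes X_ne: "feasX s \<noteq> {}" and X_bdd: "bounded (feasX s)" and X_cvx: "convex (feasX s)"
    and s_C1: "C1_fun s" and s_qc: "\<And>i. quasiconvex_fun (\<lambda>x. s x $ i)"
    and f_C1: "C1_fun f" and f_pc: "\<And>i. pseudoconvex_fun (\<lambda>x. f x $ i)"
    and g_C1: "C1_fun (\<lambda>(x, y). g x y)" and g_qc: "\<And>i. quasiconvex_fun (\<lambda>(x, y). g x y $ i)"
    and h_cont: "continuous_on UNIV (\<lambda>(x, y). h x y)" and h_pc: "pseudoconvex_fun (\<lambda>(x, y). h x y)"
    and M_bd: "\<And>x. x \<in> feasX s \<Longrightarrow> f x \<le> M"
  shows "(\<forall>zb xb yb. optOP s f g h M zb \<and> optMP s f g h zb xb yb \<longrightarrow> optBP s f g h xb yb)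
    \<and> (\<forall>xb yb. optBP s f g h xb yb \<longrightarrow>
          optOP s f g h M (f xb) \<and> phi s f g h (f xb) = ereal (h xb yb))
    \<and> (INF p \<in> feasBP s f g. ereal (h (fst p) (snd p)))
        = (INF z \<in> WMin (Zdiam s f M). phi s f g h z)"
proof (intro conjI allI impI)
  fix zb xb yb assume opt: "optOP s f g h M zb \<and> optMP s f g h zb xb yb"
  then have zb: "zb \<in> WMin (Zdiam s f M)" and "(xb, yb) \<in> feasMP s f g zb"
    unfolding optOP_def optMP_def by auto
  with feasMP_subset_feasBP[OF zb M_bd] have "(xb, yb) \<in> feasBP s f g" by blast
  moreover have "ereal (h xb yb) \<le> ereal (h x' y')" if "(x', y') \<in> feasBP s f g" for x' y'
    using opt optMP_imp_phi_eq feasBP_image_WMin[OF that M_bd] phi_le_feasBP[OF that]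
    unfolding optOP_def by (metis order_trans)
  ultimately show "optBP s f g h xb yb" unfolding optBP_def by auto
next
  fix xb yb assume opt: "optBP s f g h xb yb"
  then have feas: "(xb, yb) \<in> feasBP s f g" unfolding optBP_def by blast
  have low: "ereal (h xb yb) \<le> phi s f g h z" if "z \<in> WMin (Zdiam s f M)" for z
    using optBP_imp_eq_INF[OF opt] INF_feasBP_le_phi[OF that M_bd] by simp
  show phi_eq: "phi s f g h (f xb) = ereal (h xb yb)"
    by (rule antisym[OF phi_le_feasBP[OF feas] low[OF feasBP_image_WMin[OF feas M_bd]]])
  show "optOP s f g h M (f xb)"
    unfolding optOP_def using feasBP_image_WMin[OF feas M_bd] low phi_eq by auto
next
  show "(INF p \<in> feasBP s f g. ereal (h (fst p) (snd p)))
        = (INF z \<in> WMin (Zdiam s f M). phi s f g h z)"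
    using M_bd by (rule INF_feasBP_eq_INF_phi)
qed

end
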